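(* Let $\nu\ge1$, $d:\mathbb{Z}^\nu\to\mathbb{C}$ bounded, $J=J_0+D$ on $\ell^2(\mathbb{Z}^\nu)$, and $b\in\mathbb{R}$. Suppose that for some $j\in\{1,\dots,\nu\}$ one of the following holds: (i) $\sup\{k_j: k\in\mathbb{Z}^\nu,\ \Im(d(k))=b\}<\infty$; (ii) $\inf\{k_j: k\in\mathbb{Z}^\nu,\ \Im(d(k))=b\}>-\infty$. (Here $\sup\emptyset=-\infty$ and $\inf\emptyset=+\infty$.) Then $J$ has no boundary eigenvalue with imaginary part $b$.
   Context: $k_j$ denotes the $j$-th component of $k\in\mathbb{Z}^\nu$. $J_0$ is the discrete Laplacian on $\ell^2(\mathbb{Z}^\nu)$: $(J_0u)(k)=\sum_{l\in\mathbb{Z}^\nu:\|l\|_1=1}u(k+l)$, $\|l\|_1=\sum_j|l_j|$. $D$ is multiplication by $d$. The numerical range is $\operatorname{Num}(J)=\{\langle Ju,u\rangle:\|u\|=1\}$, and a boundary eigenvalue of $J$ is an eigenvalue of $J$ lying in the topological boundary of $\operatorname{Num}(J)$. *)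

theory Defs
  imports "HOL-Analysis.Analysis"
begin

text \<open>Lattice \<int>^\<nu> is modelled as int^'n for a finite index type 'n (so \<nu> = CARD('n) \<ge> 1).
  Sequences on the lattice are functions int^'n \<Rightarrow> complex.\<close>

definition ell2 :: "(int^'n::finite \<Rightarrow> complex) set" where
  "ell2 = {u. (\<lambda>k. (cmod (u k))^2) summable_on UNIV}"

definition l2norm :: "(int^'n::finite \<Rightarrow> complex) \<Rightarrow> real" where
  "l2norm u = sqrt (\<Sum>\<^sub>\<infinity>k. (cmod (u k))^2)"

definition l2inner :: "(int^'n::finite \<Rightarrow> complex) \<Rightarrow> (int^'n \<Rightarrow> complex) \<Rightarrow> complex" where
  "l2inner u v = (\<Sum>\<^sub>\<infinity>k. u k * cnj (v k))"

definition disc_laplacian :: "(int^'n::finite \<Rightarrow> complex) \<Rightarrow> int^'n \<Rightarrow> complex" where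
  "disc_laplacian u k = (\<Sum>l \<in> {l::int^'n. (\<Sum>i\<in>UNIV. \<bar>l $ i\<bar>) = 1}. u (k + l))"

definition jacobi_op :: "(int^'n::finite \<Rightarrow> complex) \<Rightarrow> (int^'n \<Rightarrow> complex) \<Rightarrow> int^'n \<Rightarrow> complex" where
  "jacobi_op d u k = disc_laplacian u k + d k * u k"

definition num_range :: "((int^'n::finite \<Rightarrow> complex) \<Rightarrow> (int^'n \<Rightarrow> complex)) \<Rightarrow> complex set" where
  "num_range T = {l2inner (T u) u | u. u \<in> ell2 \<and> l2norm u = 1}"

definition is_eigenvalue :: "((int^'n::finite \<Rightarrow> complex) \<Rightarrow> (int^'n \<Rightarrow> complex)) \<Rightarrow> complex \<Rightarrow> bool" where
  "is_eigenvalue T \<mu> = (\<exists>u\<in>ell2. (\<exists>k. u k \<noteq> 0) \<and> T u = (\<lambda>k. \<mu> * u k))"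

definition boundary_eigenvalue :: "((int^'n::finite \<Rightarrow> complex) \<Rightarrow> (int^'n \<Rightarrow> complex)) \<Rightarrow> complex \<Rightarrow> bool" where
  "boundary_eigenvalue T \<mu> = (is_eigenvalue T \<mu> \<and> \<mu> \<in> frontier (num_range T))"

end

theory Submission
  imports Defs
begin

(* Let \<mu> be an eigenvalue of J = J0 + D lying on the frontier of its numerical range, with
   Im \<mu> = b and eigenvector u \<in> \<ell>\<^sup>2(\<int>^\<nu>).

   Interior criterion: if u(k) \<noteq> 0 but Im d(k) \<noteq> Im \<mu>, then \<mu> lies in the interior of the
   numerical range. The test vectors w = A u + T \<delta>_k span a two-dimensional space on which
   \<parallel>w\<parallel>\<^sup>2 and \<langle>J w,w\<rangle> are explicit quadratic forms in (A,T); their off-diagonal coefficient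
   \<langle>(J - \<mu>) \<delta>_k, u\<rangle> is nonzero, and an intermediate value argument shows that \<langle>J w,w\<rangle> covers
   a disc around \<mu> on the unit sphere. Hence u is supported in {k. Im d(k) = b}.

   Unique continuation: an eigenvector supported in a half-space {k. s * k_j \<le> M} is zero, by
   the eigenvalue equation just outside an extremal point of its support. *)

definition unit_steps :: "(int^'n::finite) set" where
  "unit_steps = {l. (\<Sum>i\<in>UNIV. \<bar>l $ i\<bar>) = 1}"

lemma disc_laplacian_unit_steps: "disc_laplacian u k = (\<Sum>l\<in>unit_steps. u (k + l))"
  by (simp add: disc_laplacian_def unit_steps_def)

lemma unit_step_coordinate_bound:
  assumes "l \<in> unit_steps" shows "\<bar>l $ i\<bar> \<le> 1"
proof -
  have "\<bar>l $ i\<bar> \<le> (\<Sum>i\<in>UNIV. \<bar>l $ i\<bar>)" by (rule member_le_sum) auto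
  with assms show ?thesis by (simp add: unit_steps_def)
qed

lemma finite_unit_steps: "finite (unit_steps :: (int^'n::finite) set)"
proof (rule finite_subset)
  show "unit_steps \<subseteq> vec_lambda ` (PiE (UNIV::'n set) (\<lambda>_. {-1..1::int}))"
  proof
    fix l :: "int^'n" assume "l \<in> unit_steps"
    then have "vec_nth l \<in> PiE UNIV (\<lambda>_. {-1..1::int})"
      using unit_step_coordinate_bound by (auto simp: abs_le_iff)
    then show "l \<in> vec_lambda ` (PiE UNIV (\<lambda>_. {-1..1::int}))"
      by (metis image_eqI vec_nth_inverse)
  qed
qed (intro finite_imageI finite_PiE; simp)

lemma uminus_unit_steps: "- l \<in> unit_steps \<longleftrightarrow> l \<in> unit_steps"
  by (simp add: unit_steps_def)

lemma zero_notin_unit_steps: "0 \<notin> unit_steps"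
  by (simp add: unit_steps_def)

lemma axis_unit_step:
  assumes "\<bar>s\<bar> = 1" shows "axis j s \<in> unit_steps"
proof -
  have "(\<Sum>i\<in>UNIV. \<bar>axis j s $ i\<bar>) = (\<Sum>i\<in>UNIV. if i = j then \<bar>s\<bar> else 0)"
    by (rule sum.cong) (auto simp: axis_def)
  with assms show ?thesis by (simp add: unit_steps_def)
qed

lemma unit_step_sign:
  fixes l :: "int^'n::finite" and s :: int
  assumes l: "l \<in> unit_steps" and s: "\<bar>s\<bar> = 1"
  shows "0 \<le> s * l $ j \<or> l = axis j (- s)"
proof (cases "0 \<le> s * l $ j")
  case False
  with s unit_step_coordinate_bound[OF l, of j] have lj: "l $ j = - s"
    by (auto simp: abs_if split: if_splits)
  have "(\<Sum>i\<in>UNIV. \<bar>l $ i\<bar>) = \<bar>l $ j\<bar> + (\<Sum>i\<in>UNIV-{j}. \<bar>l $ i\<bar>)"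
    by (simp add: sum.remove)
  with l s lj have "(\<Sum>i\<in>UNIV-{j}. \<bar>l $ i\<bar>) = 0" by (simp add: unit_steps_def)
  then have "\<forall>i\<in>UNIV-{j}. l $ i = 0" by (simp add: sum_nonneg_eq_0_iff)
  with lj show ?thesis by (auto simp: vec_eq_iff axis_def)
qed simp

(* Take k in the support with s * k_j maximal and p = k + s e_j; every neighbour of p
   other than k lies beyond k, so the eigenvalue equation at p reads u(k) = 0. *)
lemma eigenvector_halfspace_support_zero:
  fixes u :: "int^'n::finite \<Rightarrow> complex" and s M :: int
  assumes eig: "jacobi_op d u = (\<lambda>k. \<mu> * u k)" and s: "\<bar>s\<bar> = 1"
    and support: "\<And>k. u k \<noteq> 0 \<Longrightarrow> s * k $ j \<le> M"
  shows "u = (\<lambda>_. 0)"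
proof (rule ccontr)
  assume "u \<noteq> (\<lambda>_. 0)"
  then obtain k0 where "u k0 \<noteq> 0" by auto
  \<comment> \<open>a support point k maximising s * k_j, which exists since s * k_j \<le> M on the support\<close>
  from ex_has_least_nat[of "\<lambda>k. u k \<noteq> 0", OF this, where m="\<lambda>k. nat (M - s * k $ j)"]
  obtain k where uk: "u k \<noteq> 0"
    and least: "\<And>q. u q \<noteq> 0 \<Longrightarrow> nat (M - s * k $ j) \<le> nat (M - s * q $ j)"
    by blast
  have beyond: "u q = 0" if "s * k $ j < s * q $ j" for q
    using least[of q] support[of q] that by linarith
  define p where "p = k + axis j s"
  have ss: "s * s = 1" using s by (auto simp: abs_if split: if_splits)
  have "disc_laplacian u p = (\<Sum>l\<in>unit_steps. if l = axis j (- s) then u k else 0)"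
    unfolding disc_laplacian_unit_steps
  proof (rule sum.cong)
    fix l :: "int^'n" assume l: "l \<in> unit_steps"
    show "u (p + l) = (if l = axis j (- s) then u k else 0)"
    proof (cases "l = axis j (- s)")
      case True
      then have "p + l = k" by (simp add: p_def vec_eq_iff axis_def)
      with True show ?thesis by simp
    next
      case False
      with unit_step_sign[OF l s] have "0 \<le> s * l $ j" by blast
      with ss have "s * k $ j < s * (p + l) $ j" by (simp add: p_def algebra_simps)
      with False beyond show ?thesis by simp
    qed
  qed simp
  also have "\<dots> = u k"
    using axis_unit_step[of "- s" j] s by (simp add: sum.delta[OF finite_unit_steps])
  finally have "disc_laplacian u p = u k" .
  moreover have "u p = 0" by (rule beyond) (simp add: p_def ss algebra_simps)
  moreover have "jacobi_op d u p = \<mu> * u p" using eig by (simp add: fun_eq_iff)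
  ultimately have "u k = 0" by (simp add: jacobi_op_def)
  with uk show False by simp
qed

(* Intermediate value argument: if |a| + R\<^sup>2|W| \<le> R|c|, the equation t c = a + |t|\<^sup>2 W
   has a solution with |t| \<le> R (solve |a + r\<^sup>2 W| = r |c| for r; then t is determined). *)
lemma fixed_radius_solution:
  fixes a W c :: complex and R :: real
  assumes c: "c \<noteq> 0" and R: "0 \<le> R" and small: "cmod a + R^2 * cmod W \<le> R * cmod c"
  shows "\<exists>t. cmod t \<le> R \<and> t * c = a + of_real ((cmod t)^2) * W"
proof -
  define \<phi> where "\<phi> r = cmod (a + of_real (r^2) * W) - r * cmod c" for r
  have "\<phi> R \<le> 0"
  proof -
    have "cmod (a + of_real (R^2) * W) \<le> cmod a + R^2 * cmod W"
      using norm_triangle_ineq[of a "of_real (R^2) * W"] by (simp add: norm_mult norm_power)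
    with small show ?thesis by (simp add: \<phi>_def)
  qed
  moreover have "0 \<le> \<phi> 0" by (simp add: \<phi>_def)
  moreover have "continuous_on {0..R} \<phi>"
    unfolding \<phi>_def by (intro continuous_intros)
  ultimately obtain r where r: "0 \<le> r" "r \<le> R" "\<phi> r = 0"
    using IVT2'[of \<phi> R 0 0] R by blast
  define t where "t = (a + of_real (r^2) * W) / c"
  have "cmod t = r" using r c by (simp add: t_def \<phi>_def norm_divide field_simps)
  moreover have "t * c = a + of_real (r^2) * W" using c by (simp add: t_def)
  ultimately show ?thesis using r by blast
qed

lemma small_solution_perturbed_equation:
  fixes c e :: complex and N n :: real
  assumes N: "N > 0" and c: "c \<noteq> 0"
  shows "\<exists>\<epsilon>>0. \<forall>z. cmod z < \<epsilon> \<longrightarrow>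
           (\<exists>t. t * c + of_real ((cmod t)^2) * e = z * of_real (N + (cmod t)^2 * n)
                \<and> N + (cmod t)^2 * n > 0)"
proof -
  define K where "K = \<bar>n\<bar> + cmod e + 1"
  define C where "C = cmod c"
  have K: "K > 0" "\<bar>n\<bar> \<le> K" "\<bar>n\<bar> + cmod e \<le> K"
    unfolding K_def using norm_ge_zero[of e] by linarith+
  have C: "C > 0" using c by (simp add: C_def)
  define \<epsilon> where "\<epsilon> = min 1 (C^2 / (4 * N * K))"
  have "\<exists>t. t * c + of_real ((cmod t)^2) * e = z * of_real (N + (cmod t)^2 * n)
            \<and> N + (cmod t)^2 * n > 0" if z: "cmod z < \<epsilon>" for z
  proof -
    define W where "W = z * of_real n - e"
    define R where "R = 2 * cmod z * N / C"
    have z1: "cmod z < 1" and z2: "cmod z \<le> C^2 / (4 * N * K)" using z by (auto simp: \<epsilon>_def)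
    have "cmod W \<le> cmod z * \<bar>n\<bar> + cmod e"
      using norm_triangle_ineq4[of "z * of_real n" e] by (simp add: W_def norm_mult)
    also have "\<dots> \<le> \<bar>n\<bar> + cmod e" using z1 by (simp add: mult_left_le_one_le)
    also have "\<dots> \<le> K" by (rule K(3))
    finally have W: "cmod W \<le> K" .
    have RK: "R^2 * K \<le> cmod z * N"
    proof -
      have "R^2 * K = cmod z * N * (cmod z * (4 * N * K) / C^2)"
        using C by (simp add: R_def power2_eq_square field_simps)
      also have "\<dots> \<le> cmod z * N * 1"
        using z2 C N K by (intro mult_left_mono) (auto simp: field_simps)
      finally show ?thesis by simp
    qed
    have "cmod (z * of_real N) + R^2 * cmod W \<le> R * cmod c"
    proof -
      have "R^2 * cmod W \<le> R^2 * K" using W by (intro mult_left_mono) auto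
      moreover have "R * cmod c = 2 * (cmod z * N)" using C by (simp add: R_def C_def)
      ultimately show ?thesis using RK N by (simp add: norm_mult mult.commute)
    qed
    then obtain t where tR: "cmod t \<le> R" and t: "t * c = z * of_real N + of_real ((cmod t)^2) * W"
      using fixed_radius_solution[OF c, of R] N C by (auto simp: R_def)
    have "t * c + of_real ((cmod t)^2) * e = z * of_real (N + (cmod t)^2 * n)"
      using t by (simp add: W_def algebra_simps)
    moreover have "N + (cmod t)^2 * n > 0"
    proof -
      have "(cmod t)^2 * \<bar>n\<bar> \<le> R^2 * K"
        using tR K by (intro mult_mono power_mono) auto
      moreover have "cmod z * N < 1 * N" using z1 N by (intro mult_strict_right_mono)
      ultimately have "(cmod t)^2 * \<bar>n\<bar> < N" using RK by linarith
      moreover have "- ((cmod t)^2 * \<bar>n\<bar>) \<le> (cmod t)^2 * n"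
        using abs_ge_minus_self[of "(cmod t)^2 * n"] by (simp add: abs_mult)
      ultimately show ?thesis by linarith
    qed
    ultimately show ?thesis by blast
  qed
  moreover have "\<epsilon> > 0" using N K C by (simp add: \<epsilon>_def)
  ultimately show ?thesis by blast
qed

(* Let T u = \<mu> u with N = \<parallel>u\<parallel>\<^sup>2 > 0, and let v be a vector with
   g = \<langle>u,v\<rangle>, q = \<parallel>v\<parallel>\<^sup>2, P = \<langle>T v,u\<rangle>, h = \<langle>T v,v\<rangle>. For w = a u + t v the two displayed
   expressions are \<parallel>w\<parallel>\<^sup>2 and \<langle>T w,w\<rangle>. If \<langle>(T - \<mu>) v,u\<rangle> = P - \<mu> cnj g \<noteq> 0, every y near \<mu>
   equals \<langle>T w,w\<rangle> for a unit vector w, so \<mu> is interior to the numerical range.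
   The choice a = 1 - t cnj g / N reduces this to the scalar equation above. *)
lemma eigenvector_compression_interior:
  fixes \<mu> g P h :: complex and N q :: real
  assumes N: "N > 0" and nondegenerate: "P \<noteq> \<mu> * cnj g"
  shows "\<exists>\<epsilon>>0. \<forall>y. cmod (y - \<mu>) < \<epsilon> \<longrightarrow> (\<exists>a t.
      a * cnj a * of_real N + a * cnj t * g + t * cnj a * cnj g + t * cnj t * of_real q = 1
    \<and> \<mu> * (a * cnj a * of_real N + a * cnj t * g) + t * cnj a * P + t * cnj t * h = y)"
proof -
  define c where "c = P - \<mu> * cnj g"
  define n where "n = q - (cmod g)^2 / N"
  define e where "e = h - \<mu> * of_real q - g * c / of_real N"
  have c: "c \<noteq> 0" using nondegenerate by (simp add: c_def)
  obtain \<epsilon> where \<epsilon>: "\<epsilon> > 0" and solve: "\<And>z. cmod z < \<epsilon> \<Longrightarrow>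
      \<exists>t. t * c + of_real ((cmod t)^2) * e = z * of_real (N + (cmod t)^2 * n) \<and> N + (cmod t)^2 * n > 0"
    using small_solution_perturbed_equation[OF N c, of e n] by blast
  have "\<exists>a t. a * cnj a * of_real N + a * cnj t * g + t * cnj a * cnj g + t * cnj t * of_real q = 1
    \<and> \<mu> * (a * cnj a * of_real N + a * cnj t * g) + t * cnj a * P + t * cnj t * h = y"
    if y: "cmod (y - \<mu>) < \<epsilon>" for y
  proof -
    obtain t where t: "t * c + of_real ((cmod t)^2) * e = (y - \<mu>) * of_real (N + (cmod t)^2 * n)"
      and Q_pos: "N + (cmod t)^2 * n > 0" using solve[OF y] by blast
    define Q where "Q = N + (cmod t)^2 * n"
    have Q: "Q > 0" using Q_pos by (simp add: Q_def)
    define a where "a = 1 - t * cnj g / of_real N"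
    have tt: "t * cnj t = of_real ((cmod t)^2)" and gg: "g * cnj g = of_real ((cmod g)^2)"
      by (simp_all only: complex_norm_square)
    have norm_form: "a * cnj a * of_real N + a * cnj t * g + t * cnj a * cnj g + t * cnj t * of_real q
        = of_real Q"
      using N by (simp add: a_def Q_def n_def field_simps tt gg)
    have value_form: "\<mu> * (a * cnj a * of_real N + a * cnj t * g) + t * cnj a * P + t * cnj t * h
        = y * of_real Q"
    proof -
      have "\<mu> * (a * cnj a * of_real N + a * cnj t * g) + t * cnj a * P + t * cnj t * h
          = \<mu> * of_real Q + (t * c + of_real ((cmod t)^2) * e)"
        using N by (simp add: a_def Q_def n_def c_def e_def field_simps tt gg)
      then show ?thesis using t by (simp add: Q_def algebra_simps)
    qed
    define s :: complex where "s = of_real (sqrt Q)"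
    have ss: "s * cnj s = of_real Q" using Q by (simp add: s_def flip: of_real_mult)
    have scale: "(x / s) * cnj (x' / s) = x * cnj x' / of_real Q" for x x'
      by (simp flip: ss)
    have "Q \<noteq> 0" using Q by simp
    show ?thesis
    proof (intro exI conjI)
      show "(a / s) * cnj (a / s) * of_real N + (a / s) * cnj (t / s) * g
          + (t / s) * cnj (a / s) * cnj g + (t / s) * cnj (t / s) * of_real q = 1"
        unfolding scale using norm_form \<open>Q \<noteq> 0\<close> by (simp add: divide_simps)
      show "\<mu> * ((a / s) * cnj (a / s) * of_real N + (a / s) * cnj (t / s) * g)
          + (t / s) * cnj (a / s) * P + (t / s) * cnj (t / s) * h = y"
        unfolding scale using value_form \<open>Q \<noteq> 0\<close> by (simp add: divide_simps)
    qed
  qed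
  with \<epsilon> show ?thesis by blast
qed

lemma has_sum_finite_sum:
  fixes f :: "'i \<Rightarrow> 'a \<Rightarrow> 'b::topological_comm_monoid_add"
  assumes "finite I" and "\<And>i. i \<in> I \<Longrightarrow> (f i has_sum s i) A"
  shows "((\<lambda>x. \<Sum>i\<in>I. f i x) has_sum (\<Sum>i\<in>I. s i)) A"
  using assms by (induction I rule: finite_induct) (auto intro: has_sum_add)

definition lattice_delta :: "int^'n::finite \<Rightarrow> int^'n \<Rightarrow> complex" where
  "lattice_delta k m = (if m = k then 1 else 0)"

lemma has_sum_lattice_delta: "((\<lambda>m. f m * lattice_delta k m) has_sum f k) UNIV"
  by (rule has_sum_finite_neutralI[of "{k}"]) (auto simp: lattice_delta_def)

lemma jacobi_op_lattice_delta:
  "jacobi_op d (lattice_delta k) m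
     = (\<Sum>l\<in>unit_steps. lattice_delta (k + l) m) + d k * lattice_delta k m"
proof -
  have "disc_laplacian (lattice_delta k) m = (\<Sum>l\<in>unit_steps. lattice_delta (k - l) m)"
    unfolding disc_laplacian_unit_steps
    by (rule sum.cong) (auto simp: lattice_delta_def algebra_simps)
  also have "\<dots> = (\<Sum>l\<in>unit_steps. lattice_delta (k + l) m)"
    by (rule sum.reindex_bij_witness[where i=uminus and j=uminus]) (auto simp: uminus_unit_steps)
  finally show ?thesis by (simp add: jacobi_op_def lattice_delta_def)
qed

lemma jacobi_op_lattice_delta_diagonal: "jacobi_op d (lattice_delta k) k = d k"
  using zero_notin_unit_steps
  by (auto simp: jacobi_op_lattice_delta lattice_delta_def intro!: sum.neutral)

lemma jacobi_op_linear:
  "jacobi_op d (\<lambda>m. A * x m + T * y m) = (\<lambda>m. A * jacobi_op d x m + T * jacobi_op d y m)"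
  by (simp add: fun_eq_iff jacobi_op_def disc_laplacian_def sum.distrib sum_distrib_left algebra_simps)

lemma has_sum_ell2_norm:
  assumes "u \<in> ell2"
  shows "((\<lambda>m. u m * cnj (u m)) has_sum of_real ((l2norm u)^2)) UNIV"
proof -
  have "((\<lambda>m. (cmod (u m))^2) has_sum (\<Sum>\<^sub>\<infinity>m. (cmod (u m))^2)) UNIV"
    using assms by (simp add: ell2_def)
  moreover have "(l2norm u)^2 = (\<Sum>\<^sub>\<infinity>m. (cmod (u m))^2)"
    by (simp add: l2norm_def infsum_nonneg)
  ultimately have "((\<lambda>m. of_real ((cmod (u m))^2) :: complex) has_sum of_real ((l2norm u)^2)) UNIV"
    by (simp only: has_sum_of_real_iff)
  then show ?thesis by (simp only: complex_norm_square)
qed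

lemma l2norm_pos:
  assumes "u \<in> ell2" and "u k \<noteq> 0"
  shows "l2norm u > 0"
proof -
  have "(cmod (u k))^2 = (\<Sum>m\<in>{k}. (cmod (u m))^2)" by simp
  also have "\<dots> \<le> (\<Sum>\<^sub>\<infinity>m. (cmod (u m))^2)"
    using assms(1) by (intro finite_sum_le_infsum) (auto simp: ell2_def)
  finally have "(cmod (u k))^2 \<le> (\<Sum>\<^sub>\<infinity>m. (cmod (u m))^2)" .
  moreover have "0 < (cmod (u k))^2" using assms(2) by simp
  ultimately have "0 < (\<Sum>\<^sub>\<infinity>m. (cmod (u m))^2)" by linarith
  then show ?thesis by (simp add: l2norm_def)
qed

lemma unit_vector_of_has_sum:
  assumes "((\<lambda>m. w m * cnj (w m)) has_sum 1) UNIV"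
  shows "w \<in> ell2" and "l2norm w = 1"
proof -
  have "((\<lambda>m. Re (w m * cnj (w m))) has_sum Re 1) UNIV" by (rule has_sum_Re[OF assms])
  then have sum: "((\<lambda>m. (cmod (w m))^2) has_sum 1) UNIV"
    by (simp flip: complex_norm_square)
  then show "w \<in> ell2" by (auto simp: ell2_def summable_on_def)
  from sum show "l2norm w = 1" by (simp add: l2norm_def infsumI)
qed

lemma jacobi_op_lattice_delta_has_sum:
  "((\<lambda>m. jacobi_op d (lattice_delta k) m * cnj (u m))
      has_sum (cnj (disc_laplacian u k) + d k * cnj (u k))) UNIV"
proof -
  have "((\<lambda>m. (\<Sum>l\<in>unit_steps. cnj (u m) * lattice_delta (k + l) m)
            + d k * (cnj (u m) * lattice_delta k m))
        has_sum ((\<Sum>l\<in>unit_steps. cnj (u (k + l))) + d k * cnj (u k))) UNIV"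
    by (intro has_sum_add has_sum_finite_sum finite_unit_steps has_sum_cmult_right
        has_sum_lattice_delta)
  then show ?thesis
    by (simp add: jacobi_op_lattice_delta disc_laplacian_unit_steps sum_distrib_left
        algebra_simps)
qed

(* \<parallel>w\<parallel>\<^sup>2 for the test vector w = A u + T \<delta>_k, in the form of the compression lemma
   with g = u(k) and q = 1. *)
lemma test_vector_norm_has_sum:
  fixes u :: "int^'n::finite \<Rightarrow> complex" and A T :: complex and k :: "int^'n"
  assumes "u \<in> ell2"
  defines "w \<equiv> \<lambda>m. A * u m + T * lattice_delta k m"
  shows "((\<lambda>m. w m * cnj (w m)) has_sum
     (A * cnj A * of_real ((l2norm u)^2) + A * cnj T * u k + T * cnj A * cnj (u k) + T * cnj T)) UNIV"
proof -
  have "((\<lambda>m. (A * cnj A) * (u m * cnj (u m)) + (A * cnj T) * (u m * lattice_delta k m)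
        + (T * cnj A) * (cnj (u m) * lattice_delta k m) + (T * cnj T) * (1 * lattice_delta k m))
      has_sum (A * cnj A * of_real ((l2norm u)^2) + A * cnj T * u k + T * cnj A * cnj (u k)
        + T * cnj T * 1)) UNIV"
    by (intro has_sum_add has_sum_cmult_right has_sum_ell2_norm[OF assms(1)] has_sum_lattice_delta)
  then show ?thesis
    by (simp add: w_def lattice_delta_def algebra_simps if_distrib cong: if_cong)
qed

(* \<langle>J w,w\<rangle> for the same test vector when J u = \<mu> u, with P = \<langle>J \<delta>_k, u\<rangle> and h = d(k). *)
lemma test_vector_value_has_sum:
  fixes u :: "int^'n::finite \<Rightarrow> complex" and A T :: complex and k :: "int^'n"
  assumes "u \<in> ell2" and eig: "jacobi_op d u = (\<lambda>m. \<mu> * u m)"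
  defines "w \<equiv> \<lambda>m. A * u m + T * lattice_delta k m"
  shows "((\<lambda>m. jacobi_op d w m * cnj (w m)) has_sum
     (\<mu> * (A * cnj A * of_real ((l2norm u)^2) + A * cnj T * u k)
      + T * cnj A * (cnj (disc_laplacian u k) + d k * cnj (u k)) + T * cnj T * d k)) UNIV"
proof -
  have "((\<lambda>m. (\<mu> * A * cnj A) * (u m * cnj (u m)) + (\<mu> * A * cnj T) * (u m * lattice_delta k m)
        + (T * cnj A) * (jacobi_op d (lattice_delta k) m * cnj (u m))
        + (T * cnj T) * (jacobi_op d (lattice_delta k) m * lattice_delta k m))
      has_sum (\<mu> * A * cnj A * of_real ((l2norm u)^2) + \<mu> * A * cnj T * u k
        + T * cnj A * (cnj (disc_laplacian u k) + d k * cnj (u k))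
        + T * cnj T * jacobi_op d (lattice_delta k) k)) UNIV"
    by (intro has_sum_add has_sum_cmult_right has_sum_ell2_norm[OF assms(1)]
        has_sum_lattice_delta jacobi_op_lattice_delta_has_sum)
  moreover have "jacobi_op d w m = A * (\<mu> * u m) + T * jacobi_op d (lattice_delta k) m" for m
    using eig by (simp add: w_def jacobi_op_linear)
  ultimately show ?thesis
    by (simp add: w_def jacobi_op_lattice_delta_diagonal lattice_delta_def algebra_simps
        if_distrib cong: if_cong)
qed

(* Interior criterion: if J u = \<mu> u, u(k) \<noteq> 0 and Im d(k) \<noteq> Im \<mu>, then \<mu> is an interior point of
   the numerical range, because \<langle>(J - \<mu>) \<delta>_k, u\<rangle> = 2i (Im d(k) - Im \<mu>) cnj(u(k)) \<noteq> 0. *)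
lemma eigenvalue_in_interior_num_range:
  fixes u :: "int^'n::finite \<Rightarrow> complex"
  assumes u: "u \<in> ell2" and eig: "jacobi_op d u = (\<lambda>m. \<mu> * u m)"
    and uk: "u k \<noteq> 0" and Im_ne: "Im (d k) \<noteq> Im \<mu>"
  shows "\<mu> \<in> interior (num_range (jacobi_op d))"
proof -
  define N where "N = (l2norm u)^2"
  define P where "P = cnj (disc_laplacian u k) + d k * cnj (u k)"
  have N: "N > 0" using l2norm_pos[OF u uk] by (simp add: N_def)
  have lap: "disc_laplacian u k = (\<mu> - d k) * u k"
    using fun_cong[OF eig, of k] by (simp add: jacobi_op_def algebra_simps)
  have P_eq: "P - \<mu> * cnj (u k) = ((d k - cnj (d k)) - (\<mu> - cnj \<mu>)) * cnj (u k)"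
    unfolding P_def lap by (simp add: algebra_simps)
  have "(d k - cnj (d k)) - (\<mu> - cnj \<mu>) \<noteq> 0"
    using Im_ne by (auto simp: complex_eq_iff)
  with uk P_eq have nondegenerate: "P \<noteq> \<mu> * cnj (u k)" by auto
  obtain \<epsilon> where \<epsilon>: "\<epsilon> > 0" and solve: "\<And>y. cmod (y - \<mu>) < \<epsilon> \<Longrightarrow> \<exists>A T.
      A * cnj A * of_real N + A * cnj T * u k + T * cnj A * cnj (u k) + T * cnj T * of_real 1 = 1
    \<and> \<mu> * (A * cnj A * of_real N + A * cnj T * u k) + T * cnj A * P + T * cnj T * d k = y"
    using eigenvector_compression_interior[OF N nondegenerate, of 1 "d k"] by blast
  have "ball \<mu> \<epsilon> \<subseteq> num_range (jacobi_op d)"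
  proof
    fix y assume "y \<in> ball \<mu> \<epsilon>"
    then have "cmod (y - \<mu>) < \<epsilon>" by (simp add: dist_norm norm_minus_commute)
    from solve[OF this] obtain A T where
      norm_one: "A * cnj A * of_real N + A * cnj T * u k + T * cnj A * cnj (u k) + T * cnj T * of_real 1 = 1"
      and value_y: "\<mu> * (A * cnj A * of_real N + A * cnj T * u k) + T * cnj A * P + T * cnj T * d k = y"
      by blast
    define w where "w = (\<lambda>m. A * u m + T * lattice_delta k m)"
    have "((\<lambda>m. w m * cnj (w m)) has_sum
        (A * cnj A * of_real N + A * cnj T * u k + T * cnj A * cnj (u k) + T * cnj T)) UNIV"
      unfolding w_def N_def by (rule test_vector_norm_has_sum[OF u, of A T k])
    then have "((\<lambda>m. w m * cnj (w m)) has_sum 1) UNIV" using norm_one by simp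
    then have w: "w \<in> ell2" "l2norm w = 1" by (rule unit_vector_of_has_sum)+
    have "((\<lambda>m. jacobi_op d w m * cnj (w m)) has_sum
        (\<mu> * (A * cnj A * of_real N + A * cnj T * u k) + T * cnj A * P + T * cnj T * d k)) UNIV"
      unfolding w_def N_def P_def by (rule test_vector_value_has_sum[OF u eig, of A T k])
    then have "((\<lambda>m. jacobi_op d w m * cnj (w m)) has_sum y) UNIV" by (simp only: value_y)
    then have "l2inner (jacobi_op d w) w = y" by (simp add: l2inner_def infsumI)
    with w show "y \<in> num_range (jacobi_op d)" unfolding num_range_def by blast
  qed
  with \<epsilon> show ?thesis by (auto simp: mem_interior)
qed

lemma signed_upper_bound:
  fixes S :: "int set"
  assumes "bdd_above S \<or> bdd_below S"
  obtains s M where "\<bar>s\<bar> = 1" and "\<And>x. x \<in> S \<Longrightarrow> s * x \<le> M"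
  using assms
proof
  assume "bdd_above S"
  then obtain M where "\<And>x. x \<in> S \<Longrightarrow> x \<le> M" by (auto simp: bdd_above_def)
  with that[of 1 M] show thesis by simp
next
  assume "bdd_below S"
  then obtain m where "\<And>x. x \<in> S \<Longrightarrow> m \<le> x" by (auto simp: bdd_below_def)
  with that[of "-1" "-m"] show thesis by simp
qed

(* A boundary eigenvector is supported where Im d = b by the interior criterion; hypothesis
   (i) or (ii) puts that set in a half-space, so unique continuation forces u = 0. *)
theorem mainTheorem5:
  fixes d :: "int^'n::finite \<Rightarrow> complex" and b :: real
  assumes "bounded (range d)"
    and "\<exists>j. bdd_above {k $ j | k. Im (d k) = b} \<or> bdd_below {k $ j | k. Im (d k) = b}"
  shows "\<not> (\<exists>\<mu>. Im \<mu> = b \<and> boundary_eigenvalue (jacobi_op d) \<mu>)"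
proof
  assume "\<exists>\<mu>. Im \<mu> = b \<and> boundary_eigenvalue (jacobi_op d) \<mu>"
  then obtain \<mu> u where Im_\<mu>: "Im \<mu> = b" and u: "u \<in> ell2" and nonzero: "\<exists>k. u k \<noteq> 0"
    and eig: "jacobi_op d u = (\<lambda>k. \<mu> * u k)"
    and not_interior: "\<mu> \<notin> interior (num_range (jacobi_op d))"
    by (auto simp: boundary_eigenvalue_def is_eigenvalue_def frontier_def)
  have support: "Im (d k) = b" if "u k \<noteq> 0" for k
    using eigenvalue_in_interior_num_range[OF u eig that] not_interior Im_\<mu> by blast
  from assms(2) obtain j where "bdd_above {k $ j | k. Im (d k) = b} \<or> bdd_below {k $ j | k. Im (d k) = b}"
    by (elim exE)
  then obtain s M where s: "\<bar>s\<bar> = 1" and bound: "\<And>x. x \<in> {k $ j | k. Im (d k) = b} \<Longrightarrow> s * x \<le> M"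
    by (rule signed_upper_bound) blast
  have "u = (\<lambda>_. 0)"
    by (rule eigenvector_halfspace_support_zero[OF eig s]) (use bound support in blast)
  with nonzero show False by simp
qed

end
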